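(* Let $E$ be an infinite dimensional separable real Hilbert space and let $R\colon E\to E$ be a linear isometry. Then the map $$\Phi\colon\mathcal{W}_2(E)\to\mathcal{W}_2(E),\qquad \mu\mapsto\big(t_{m(\mu)}\circ R\circ t_{-m(\mu)}\big)_\#\mu$$ is an isometry of $\mathcal{W}_2(E)$.
   Context: $\mathcal{W}_2(E)$ is the set of Borel probability measures $\mu$ on $E$ with $\int_E\|x\|^2\,d\mu(x)<\infty$, with the distance $d_{\mathcal{W}_2}(\mu,\nu)=\big(\inf_{\pi\in\Pi(\mu,\nu)}\int_{E\times E}\|x-y\|^2\,d\pi(x,y)\big)^{1/2}$, $\Pi(\mu,\nu)$ being the set of couplings of $\mu$ and $\nu$. An isometry is a distance preserving bijection. The barycenter $m(\mu)\in E$ is the point with $\langle m(\mu),z\rangle=\int_E\langle x,z\rangle\,d\mu(x)$ for all $z\in E$. $t_v(x)=x+v$ is translation by $v$, and $g_\#\mu=\mu\circ g^{-1}$ is the push-forward. *)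

theory Defs
  imports "HOL-Probability.Probability"
begin

definition W2 :: "'a::real_normed_vector measure set" where
  "W2 = {\<mu>. prob_space \<mu> \<and> sets \<mu> = sets borel \<and>
            (\<integral>\<^sup>+ x. ennreal ((norm x)\<^sup>2) \<partial>\<mu>) < \<infinity>}"

definition couplings :: "'a::topological_space measure \<Rightarrow> 'a measure \<Rightarrow> ('a \<times> 'a) measure set" where
  "couplings \<mu> \<nu> = {\<pi>. prob_space \<pi> \<and> sets \<pi> = sets borel \<and>
                        distr \<pi> borel fst = \<mu> \<and> distr \<pi> borel snd = \<nu>}"

definition dW2 :: "'a::real_normed_vector measure \<Rightarrow> 'a measure \<Rightarrow> real" where
  "dW2 \<mu> \<nu> = sqrt (enn2real (INF \<pi>\<in>couplings \<mu> \<nu>. \<integral>\<^sup>+ p. ennreal ((norm (fst p - snd p))\<^sup>2) \<partial>\<pi>))"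

definition barycenter :: "'a::real_inner measure \<Rightarrow> 'a" where
  "barycenter \<mu> = (THE m. \<forall>z. m \<bullet> z = (\<integral> x. x \<bullet> z \<partial>\<mu>))"

definition transl :: "'a::real_vector \<Rightarrow> 'a \<Rightarrow> 'a" where
  "transl v x = x + v"

end

theory Submission
  imports Defs
begin

text \<open>
  Write \<open>g\<^sub>\<mu> x = R (x - m(\<mu>)) + m(\<mu>)\<close>. Since \<open>R\<close> preserves norms, for a coupling \<open>\<pi>\<close> of
  \<open>\<mu>, \<nu>\<close> the squared cost of the pushed coupling \<open>(g\<^sub>\<mu> \<times> g\<^sub>\<nu>)\<^sub>#\<pi>\<close> differs from that of \<open>\<pi>\<close>
  only by the integral of a bounded linear functional of \<open>(x - m(\<mu>)) - (y - m(\<nu>))\<close>, which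
  vanishes by the definition of the barycenters. Hence \<open>\<Phi>\<close> does not increase the Wasserstein
  distance. As \<open>\<Phi>\<close> preserves barycenters, the map built from \<open>R\<^sup>-\<^sup>1\<close> is its inverse, which also
  does not increase distances. Barycenters exist by the Riesz representation theorem: the
  minimiser of \<open>\<parallel>m\<parallel>\<^sup>2 - 2 L m\<close> represents \<open>L\<close>.
\<close>

lemma Cauchy_if_sq_dist_le:
  fixes s :: "nat \<Rightarrow> 'a::metric_space"
  assumes bound: "\<And>n k. (dist (s n) (s k))\<^sup>2 \<le> \<delta> n + \<delta> k" and \<delta>: "\<delta> \<longlonglongrightarrow> 0"
  shows "Cauchy s"
proof (rule metric_CauchyI)
  fix e :: real assume "0 < e"
  then obtain N where N: "\<And>n. N \<le> n \<Longrightarrow> \<delta> n < e\<^sup>2 / 2"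
    using order_tendstoD(2)[OF \<delta>, of "e\<^sup>2 / 2"] by (auto simp: eventually_sequentially)
  have "dist (s n) (s k) < e" if "N \<le> n" "N \<le> k" for n k
  proof -
    have "(dist (s n) (s k))\<^sup>2 < e\<^sup>2"
      using bound[of n k] N[OF that(1)] N[OF that(2)] by linarith
    then show ?thesis using \<open>0 < e\<close> by (simp add: power_less_imp_less_base)
  qed
  then show "\<exists>N. \<forall>n\<ge>N. \<forall>k\<ge>N. dist (s n) (s k) < e" by blast
qed

lemma bounded_linear_quadratic_has_minimizer:
  fixes L :: "'a::{real_inner, complete_space} \<Rightarrow> real"
  assumes L: "bounded_linear L"
  obtains m where "\<And>y. (norm m)\<^sup>2 - 2 * L m \<le> (norm y)\<^sup>2 - 2 * L y"
proof -
  interpret L: bounded_linear L by (fact L)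
  define G where "G y = (norm y)\<^sup>2 - 2 * L y" for y
  obtain K where K: "\<And>y. norm (L y) \<le> norm y * K"
    using L.bounded by blast
  have "- K\<^sup>2 \<le> G y" for y
  proof -
    have "L y \<le> norm y * K" using K[of y] by simp
    moreover have "0 \<le> (norm y - K)\<^sup>2" by simp
    ultimately show ?thesis by (simp add: G_def power2_eq_square algebra_simps)
  qed
  then have bdd: "bdd_below (range G)" by (auto intro!: bdd_belowI[where m = "- K\<^sup>2"])
  define c where "c = Inf (range G)"
  have c_le: "c \<le> G y" for y unfolding c_def using bdd by (rule cINF_lower) simp
  have "\<exists>y. G y < c + inverse (Suc n)" for n
  proof -
    have "Inf (range G) < c + inverse (Suc n)" by (simp add: c_def)
    then show ?thesis using cInf_less_iff[OF _ bdd] by auto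
  qed
  then obtain s where s: "\<And>n. G (s n) < c + inverse (Suc n)" by metis
  have parallelogram: "(norm (x - y))\<^sup>2 = 2 * G x + 2 * G y - 4 * G ((x + y) /\<^sub>R 2)" for x y
    by (simp add: G_def L.add L.scaleR power2_norm_eq_inner inner_add inner_diff algebra_simps)
  have s_close: "(dist (s n) (s k))\<^sup>2 \<le> 2 * inverse (Suc n) + 2 * inverse (Suc k)" for n k
    using parallelogram[of "s n" "s k"] s[of n] s[of k] c_le[of "(s n + s k) /\<^sub>R 2"]
    unfolding dist_norm by linarith
  have "Cauchy s"
    using s_close by (rule Cauchy_if_sq_dist_le)
      (intro tendsto_mult_right_zero LIMSEQ_inverse_real_of_nat)
  then obtain m where "s \<longlonglongrightarrow> m"
    by (auto simp: Cauchy_convergent_iff convergent_def)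
  then have "(\<lambda>n. G (s n)) \<longlonglongrightarrow> G m"
    unfolding G_def by (intro tendsto_intros L.tendsto)
  moreover have "(\<lambda>n. c + inverse (Suc n)) \<longlonglongrightarrow> c"
    using tendsto_add[OF tendsto_const LIMSEQ_inverse_real_of_nat] by simp
  ultimately have "G m \<le> c"
    using s by (intro LIMSEQ_le) (auto intro: less_imp_le)
  then show ?thesis using that c_le unfolding G_def by (meson order.trans)
qed

lemma bounded_linear_inner_representation:
  fixes L :: "'a::{real_inner, complete_space} \<Rightarrow> real"
  assumes L: "bounded_linear L"
  obtains e where "\<And>x. L x = x \<bullet> e"
proof -
  interpret L: bounded_linear L by (fact L)
  obtain m where min: "\<And>y. (norm m)\<^sup>2 - 2 * L m \<le> (norm y)\<^sup>2 - 2 * L y"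
    using bounded_linear_quadratic_has_minimizer[OF L] by blast
  have "L x = x \<bullet> m" for x
  proof (rule ccontr)
    define d where "d = x \<bullet> m - L x"
    define a where "a = (norm x)\<^sup>2"
    define t where "t = - d / (a + 1)"
    have "0 \<le> a" by (simp add: a_def)
    assume "L x \<noteq> x \<bullet> m"
    then have "0 < d\<^sup>2" by (simp add: d_def)
    have "(norm (m + t *\<^sub>R x))\<^sup>2 = (norm m)\<^sup>2 + 2 * t * (x \<bullet> m) + t\<^sup>2 * a"
      unfolding a_def power2_norm_eq_inner
      by (simp add: inner_add_left inner_add_right inner_commute power2_eq_square algebra_simps)
    then have "(norm (m + t *\<^sub>R x))\<^sup>2 - 2 * L (m + t *\<^sub>R x) = (norm m)\<^sup>2 - 2 * L m + (2 * t * d + t\<^sup>2 * a)"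
      by (simp add: d_def L.add L.scaleR algebra_simps)
    also have "2 * t * d + t\<^sup>2 * a = - d\<^sup>2 * (a + 2) / (a + 1)\<^sup>2"
      unfolding t_def a_def by (simp add: divide_simps power2_eq_square) algebra
    also have "\<dots> < 0"
      using \<open>0 < d\<^sup>2\<close> by (intro divide_neg_pos mult_neg_pos) (use \<open>0 \<le> a\<close> in auto)
    finally show False
      using min[of "m + t *\<^sub>R x"] by simp
  qed
  then show ?thesis by (rule that)
qed


lemma barycenter_eqI:
  fixes m :: "'a::real_inner"
  assumes "\<And>z. m \<bullet> z = (\<integral>x. x \<bullet> z \<partial>\<mu>)"
  shows "barycenter \<mu> = m"
  unfolding barycenter_def
proof (rule the_equality)
  show "\<forall>z. m \<bullet> z = (\<integral>x. x \<bullet> z \<partial>\<mu>)" using assms by simp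
next
  fix m' assume "\<forall>z. m' \<bullet> z = (\<integral>x. x \<bullet> z \<partial>\<mu>)"
  then have "(m' - m) \<bullet> z = 0" for z using assms by (simp add: inner_diff_left)
  from this[of "m' - m"] show "m' = m" by simp
qed

lemma integrable_inner_left_of_integrable_norm:
  fixes \<mu> :: "'a::real_inner measure"
  assumes sets: "sets \<mu> = sets borel" and int: "integrable \<mu> norm"
  shows "integrable \<mu> (\<lambda>x. x \<bullet> z)"
proof (rule Bochner_Integration.integrable_bound)
  show "integrable \<mu> (\<lambda>x. norm x * norm z)" using int by simp
  show "(\<lambda>x. x \<bullet> z) \<in> borel_measurable \<mu>"
    unfolding measurable_cong_sets[OF sets refl]
    by (intro borel_measurable_continuous_onI continuous_intros)
  show "AE x in \<mu>. norm (x \<bullet> z) \<le> norm (norm x * norm z)"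
    by (simp add: Cauchy_Schwarz_ineq2)
qed

lemma barycenter_inner:
  fixes \<mu> :: "'a::{real_inner, complete_space} measure"
  assumes sets: "sets \<mu> = sets borel" and int: "integrable \<mu> norm"
  shows "barycenter \<mu> \<bullet> z = (\<integral>x. x \<bullet> z \<partial>\<mu>)"
proof -
  have int_inner: "integrable \<mu> (\<lambda>x. x \<bullet> z)" for z
    using sets int by (rule integrable_inner_left_of_integrable_norm)
  have "bounded_linear (\<lambda>z. \<integral>x. x \<bullet> z \<partial>\<mu>)"
  proof (rule bounded_linear_intro)
    show "(\<integral>x. x \<bullet> (y + z) \<partial>\<mu>) = (\<integral>x. x \<bullet> y \<partial>\<mu>) + (\<integral>x. x \<bullet> z \<partial>\<mu>)" for y z
      using int_inner by (simp add: inner_add_right)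
    show "(\<integral>x. x \<bullet> (r *\<^sub>R z) \<partial>\<mu>) = r *\<^sub>R (\<integral>x. x \<bullet> z \<partial>\<mu>)" for r z
      by simp
    show "norm (\<integral>x. x \<bullet> z \<partial>\<mu>) \<le> norm z * (\<integral>x. norm x \<partial>\<mu>)" for z
    proof -
      have "norm (\<integral>x. x \<bullet> z \<partial>\<mu>) \<le> (\<integral>x. norm (x \<bullet> z) \<partial>\<mu>)"
        by (rule integral_norm_bound)
      also have "\<dots> \<le> (\<integral>x. norm x * norm z \<partial>\<mu>)"
        using int_inner int by (intro integral_mono) (auto simp: Cauchy_Schwarz_ineq2)
      finally show ?thesis by (simp add: mult.commute)
    qed
  qed
  then obtain e where e: "\<And>z. (\<integral>x. x \<bullet> z \<partial>\<mu>) = z \<bullet> e"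
    using bounded_linear_inner_representation by blast
  then have "barycenter \<mu> = e"
    by (intro barycenter_eqI) (simp add: inner_commute)
  then show ?thesis by (simp add: e inner_commute)
qed

lemma integral_bounded_linear_centred:
  fixes T :: "'a::{real_inner, complete_space} \<Rightarrow> real"
  assumes T: "bounded_linear T" and "prob_space \<mu>"
    and sets: "sets \<mu> = sets borel" and int: "integrable \<mu> norm"
  shows "integrable \<mu> (\<lambda>x. T (x - barycenter \<mu>))"
    and "(\<integral>x. T (x - barycenter \<mu>) \<partial>\<mu>) = 0"
proof -
  interpret prob_space \<mu> by fact
  obtain e where e: "\<And>x. T x = x \<bullet> e"
    using bounded_linear_inner_representation[OF T] by blast
  have T_centred: "T (x - barycenter \<mu>) = x \<bullet> e - barycenter \<mu> \<bullet> e" for x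
    by (simp add: e inner_diff_left)
  have int_e: "integrable \<mu> (\<lambda>x. x \<bullet> e)"
    using sets int by (rule integrable_inner_left_of_integrable_norm)
  then show "integrable \<mu> (\<lambda>x. T (x - barycenter \<mu>))"
    unfolding T_centred by simp
  show "(\<integral>x. T (x - barycenter \<mu>) \<partial>\<mu>) = 0"
    unfolding T_centred using int_e barycenter_inner[OF sets int] by (simp add: prob_space)
qed

lemma W2_iff:
  "\<mu> \<in> W2 \<longleftrightarrow> prob_space \<mu> \<and> sets \<mu> = sets borel \<and> integrable \<mu> (\<lambda>x. (norm x)\<^sup>2)"
proof -
  have "(\<integral>\<^sup>+x. ennreal ((norm x)\<^sup>2) \<partial>\<mu>) < \<infinity> \<longleftrightarrow> integrable \<mu> (\<lambda>x. (norm x)\<^sup>2)"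
    if sets: "sets \<mu> = sets borel"
  proof -
    have "(\<lambda>x. (norm x)\<^sup>2) \<in> borel_measurable \<mu>"
      unfolding measurable_cong_sets[OF sets refl]
      by (intro borel_measurable_continuous_onI continuous_intros)
    then show ?thesis by (simp add: integrable_iff_bounded)
  qed
  then show ?thesis unfolding W2_def by blast
qed

lemma W2_measurable: "\<mu> \<in> W2 \<Longrightarrow> measurable \<mu> = measurable borel"
  by (intro ext measurable_cong_sets) (auto simp: W2_def)

lemma square_sum_le: "((a::real) + b)\<^sup>2 \<le> 2 * a\<^sup>2 + 2 * b\<^sup>2"
proof -
  have "0 \<le> (a - b)\<^sup>2" by simp
  then show ?thesis by (simp add: power2_eq_square algebra_simps)
qed

lemma W2_integrable_norm:
  assumes "\<mu> \<in> W2"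
  shows "integrable \<mu> norm"
proof -
  interpret prob_space \<mu> using assms by (simp add: W2_iff)
  show ?thesis
  proof (rule Bochner_Integration.integrable_bound)
    show "integrable \<mu> (\<lambda>x. 1 + (norm x)\<^sup>2)" using assms by (simp add: W2_iff)
    show "norm \<in> borel_measurable \<mu>"
      using assms by (simp add: W2_measurable borel_measurable_continuous_onI continuous_on_norm_id)
    show "AE x in \<mu>. norm (norm x) \<le> norm (1 + (norm x)\<^sup>2)"
    proof (rule AE_I2)
      fix x :: 'a
      have "2 * norm x \<le> 1 + (norm x)\<^sup>2"
        using zero_le_power2[of "norm x - 1"] unfolding power2_diff by simp
      then have "norm x \<le> 1 + (norm x)\<^sup>2"
        using norm_ge_zero[of x] by linarith
      then show "norm (norm x) \<le> norm (1 + (norm x)\<^sup>2)" by simp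
    qed
  qed
qed

lemma distr_in_W2:
  fixes f :: "'a::real_normed_vector \<Rightarrow> 'b::real_normed_vector"
  assumes \<mu>: "\<mu> \<in> W2" and f: "f \<in> borel_measurable borel"
    and bound: "\<And>x. norm (f x) \<le> norm x + C"
  shows "distr \<mu> borel f \<in> W2"
proof -
  interpret prob_space \<mu> using \<mu> by (simp add: W2_iff)
  have f_meas: "f \<in> borel_measurable \<mu>" using \<mu> f by (simp add: W2_measurable)
  have "integrable \<mu> (\<lambda>x. (norm (f x))\<^sup>2)"
  proof (rule Bochner_Integration.integrable_bound)
    show "integrable \<mu> (\<lambda>x. 2 * (norm x)\<^sup>2 + 2 * C\<^sup>2)" using \<mu> by (simp add: W2_iff)
    show "(\<lambda>x. (norm (f x))\<^sup>2) \<in> borel_measurable \<mu>" using f_meas by measurable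
    show "AE x in \<mu>. norm ((norm (f x))\<^sup>2) \<le> norm (2 * (norm x)\<^sup>2 + 2 * C\<^sup>2)"
    proof (rule AE_I2)
      fix x
      have "(norm (f x))\<^sup>2 \<le> (norm x + C)\<^sup>2" by (rule power_mono[OF bound norm_ge_zero])
      also have "\<dots> \<le> 2 * (norm x)\<^sup>2 + 2 * C\<^sup>2" by (rule square_sum_le)
      finally show "norm ((norm (f x))\<^sup>2) \<le> norm (2 * (norm x)\<^sup>2 + 2 * C\<^sup>2)" by simp
    qed
  qed
  then show ?thesis
    using \<mu> f_meas by (simp add: W2_iff prob_space_distr integrable_distr_eq)
qed

lemma W2_integral_centred:
  fixes T :: "'a::{real_inner, complete_space} \<Rightarrow> real"
  assumes "bounded_linear T" and "\<mu> \<in> W2"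
  shows "integrable \<mu> (\<lambda>x. T (x - barycenter \<mu>))"
    and "(\<integral>x. T (x - barycenter \<mu>) \<partial>\<mu>) = 0"
  using integral_bounded_linear_centred[OF assms(1)] W2_integrable_norm[OF assms(2)] assms(2)
  by (auto simp: W2_iff)

lemma couplings_measurable: "\<pi> \<in> couplings \<mu> \<nu> \<Longrightarrow> measurable \<pi> = measurable borel"
  by (intro ext measurable_cong_sets) (auto simp: couplings_def)

lemma
  fixes f :: "'a::topological_space \<Rightarrow> real"
  assumes \<pi>: "\<pi> \<in> couplings \<mu> \<nu>" and f: "f \<in> borel_measurable borel"
  shows coupling_integrable_fst: "integrable \<mu> f \<Longrightarrow> integrable \<pi> (\<lambda>p. f (fst p))"
    and coupling_integral_fst: "(\<integral>p. f (fst p) \<partial>\<pi>) = (\<integral>x. f x \<partial>\<mu>)"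
    and coupling_integrable_snd: "integrable \<nu> f \<Longrightarrow> integrable \<pi> (\<lambda>p. f (snd p))"
    and coupling_integral_snd: "(\<integral>p. f (snd p) \<partial>\<pi>) = (\<integral>x. f x \<partial>\<nu>)"
proof -
  have fst: "fst \<in> borel_measurable \<pi>" and snd: "snd \<in> borel_measurable \<pi>"
    using \<pi> by (simp_all add: couplings_measurable borel_measurable_continuous_onI
        continuous_on_fst continuous_on_snd)
  have marginals: "distr \<pi> borel fst = \<mu>" "distr \<pi> borel snd = \<nu>"
    using \<pi> by (simp_all add: couplings_def)
  show "integrable \<mu> f \<Longrightarrow> integrable \<pi> (\<lambda>p. f (fst p))"
    using integrable_distr_eq[OF fst f] marginals by simp
  show "(\<integral>p. f (fst p) \<partial>\<pi>) = (\<integral>x. f x \<partial>\<mu>)"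
    using integral_distr[OF fst f] marginals by simp
  show "integrable \<nu> f \<Longrightarrow> integrable \<pi> (\<lambda>p. f (snd p))"
    using integrable_distr_eq[OF snd f] marginals by simp
  show "(\<integral>p. f (snd p) \<partial>\<pi>) = (\<integral>x. f x \<partial>\<nu>)"
    using integral_distr[OF snd f] marginals by simp
qed

lemma couplings_distr_pair:
  fixes f g :: "'a::topological_space \<Rightarrow> 'b::topological_space"
  assumes \<pi>: "\<pi> \<in> couplings \<mu> \<nu>" and f: "continuous_on UNIV f" and g: "continuous_on UNIV g"
  shows "distr \<pi> borel (\<lambda>p. (f (fst p), g (snd p))) \<in> couplings (distr \<mu> borel f) (distr \<nu> borel g)"
proof -
  let ?h = "\<lambda>p. (f (fst p), g (snd p))"
  have "continuous_on UNIV ?h"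
    by (intro continuous_on_Pair continuous_on_compose2[OF f] continuous_on_compose2[OF g]
        continuous_intros) auto
  then have h: "?h \<in> borel_measurable borel"
    by (rule borel_measurable_continuous_onI)
  have "fst \<in> borel_measurable (borel :: ('a \<times> 'a) measure)"
    and "snd \<in> borel_measurable (borel :: ('a \<times> 'a) measure)"
    and "fst \<in> borel_measurable (borel :: ('b \<times> 'b) measure)"
    and "snd \<in> borel_measurable (borel :: ('b \<times> 'b) measure)"
    and "f \<in> borel_measurable borel" and "g \<in> borel_measurable borel"
    using f g by (simp_all add: borel_measurable_continuous_onI continuous_on_fst continuous_on_snd)
  with h have "distr (distr \<pi> borel ?h) borel fst = distr (distr \<pi> borel fst) borel f"
    and "distr (distr \<pi> borel ?h) borel snd = distr (distr \<pi> borel snd) borel g"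
    by (simp_all add: couplings_measurable[OF \<pi>] distr_distr comp_def)
  then show ?thesis
    using \<pi> h by (auto simp: couplings_def couplings_measurable[OF \<pi>] prob_space.prob_space_distr)
qed

lemma coupling_integral_centred:
  fixes T :: "'a::{real_inner, complete_space} \<Rightarrow> real"
  assumes T: "bounded_linear T" and \<pi>: "\<pi> \<in> couplings \<mu> \<nu>"
    and \<mu>: "\<mu> \<in> W2" and \<nu>: "\<nu> \<in> W2"
  shows "integrable \<pi> (\<lambda>p. T ((fst p - barycenter \<mu>) - (snd p - barycenter \<nu>)))"
    and "(\<integral>p. T ((fst p - barycenter \<mu>) - (snd p - barycenter \<nu>)) \<partial>\<pi>) = 0"
proof -
  interpret T: bounded_linear T by (fact T)
  have meas: "(\<lambda>x. T (x - c)) \<in> borel_measurable borel" for c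
    by (intro borel_measurable_continuous_onI T.continuous_on continuous_intros)
  note fst = coupling_integrable_fst[OF \<pi> meas] coupling_integral_fst[OF \<pi> meas]
  note snd = coupling_integrable_snd[OF \<pi> meas] coupling_integral_snd[OF \<pi> meas]
  show "integrable \<pi> (\<lambda>p. T ((fst p - barycenter \<mu>) - (snd p - barycenter \<nu>)))"
    using fst(1) snd(1) W2_integral_centred(1)[OF T \<mu>] W2_integral_centred(1)[OF T \<nu>] by (simp add: T.diff)
  show "(\<integral>p. T ((fst p - barycenter \<mu>) - (snd p - barycenter \<nu>)) \<partial>\<pi>) = 0"
    using fst snd W2_integral_centred[OF T \<mu>] W2_integral_centred[OF T \<nu>] by (simp add: T.diff)
qed

definition transport_cost :: "('a::real_normed_vector \<times> 'a) measure \<Rightarrow> ennreal" where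
  "transport_cost \<pi> = (\<integral>\<^sup>+p. ennreal ((norm (fst p - snd p))\<^sup>2) \<partial>\<pi>)"

lemma coupling_integrable_sq_dist:
  assumes \<pi>: "\<pi> \<in> couplings \<mu> \<nu>" and \<mu>: "\<mu> \<in> W2" and \<nu>: "\<nu> \<in> W2"
  shows "integrable \<pi> (\<lambda>p. (norm (fst p - snd p))\<^sup>2)"
proof (rule Bochner_Integration.integrable_bound)
  have meas: "(\<lambda>x. (norm x)\<^sup>2) \<in> borel_measurable borel"
    by (intro borel_measurable_continuous_onI continuous_intros)
  show "integrable \<pi> (\<lambda>p. 2 * (norm (fst p))\<^sup>2 + 2 * (norm (snd p))\<^sup>2)"
    using coupling_integrable_fst[OF \<pi> meas] coupling_integrable_snd[OF \<pi> meas] \<mu> \<nu>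
    by (simp add: W2_iff)
  show "(\<lambda>p. (norm (fst p - snd p))\<^sup>2) \<in> borel_measurable \<pi>"
    using \<pi> by (simp add: couplings_measurable borel_measurable_continuous_onI continuous_intros)
  show "AE p in \<pi>. norm ((norm (fst p - snd p))\<^sup>2) \<le> norm (2 * (norm (fst p))\<^sup>2 + 2 * (norm (snd p))\<^sup>2)"
  proof (rule AE_I2)
    fix p :: "'a \<times> 'a"
    have "(norm (fst p - snd p))\<^sup>2 \<le> (norm (fst p) + norm (snd p))\<^sup>2"
      by (rule power_mono[OF norm_triangle_ineq4 norm_ge_zero])
    also have "\<dots> \<le> 2 * (norm (fst p))\<^sup>2 + 2 * (norm (snd p))\<^sup>2" by (rule square_sum_le)
    finally show "norm ((norm (fst p - snd p))\<^sup>2) \<le> norm (2 * (norm (fst p))\<^sup>2 + 2 * (norm (snd p))\<^sup>2)"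
      by simp
  qed
qed

definition rotation_about :: "('a::real_vector \<Rightarrow> 'a) \<Rightarrow> 'a \<Rightarrow> 'a \<Rightarrow> 'a" where
  "rotation_about R m x = R (x - m) + m"

definition rotate_at_barycenter :: "('a::real_inner \<Rightarrow> 'a) \<Rightarrow> 'a measure \<Rightarrow> 'a measure" where
  "rotate_at_barycenter R \<mu> = distr \<mu> borel (rotation_about R (barycenter \<mu>))"

locale linear_isometry =
  fixes R :: "'a::{real_inner, complete_space} \<Rightarrow> 'a"
  assumes linear: "linear R" and norm_eq: "\<And>x. norm (R x) = norm x"
begin

lemma bounded_linear: "bounded_linear R"
  by (rule bounded_linear_intro[where K = 1])
    (simp_all add: linear_add[OF linear] linear_scale[OF linear] norm_eq)

lemma continuous_on_compose [continuous_intros]: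
  "continuous_on S f \<Longrightarrow> continuous_on S (\<lambda>x. R (f x))"
  by (rule bounded_linear.continuous_on[OF bounded_linear])

lemma inj: "inj R"
proof (rule injI)
  fix x y assume "R x = R y"
  then have "R (x - y) = 0" by (simp add: linear_diff[OF linear])
  then show "x = y" by (metis norm_eq norm_eq_zero eq_iff_diff_eq_0)
qed

lemma continuous_rotation_about: "continuous_on UNIV (rotation_about R m)"
  unfolding rotation_about_def by (intro continuous_intros)

lemma rotation_about_measurable: "rotation_about R m \<in> borel_measurable borel"
  by (rule borel_measurable_continuous_onI[OF continuous_rotation_about])

lemma norm_rotation_about_le: "norm (rotation_about R m x) \<le> norm x + 2 * norm m"
proof -
  have "norm (rotation_about R m x) \<le> norm (x - m) + norm m"
    unfolding rotation_about_def by (metis norm_eq norm_triangle_ineq)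
  also have "\<dots> \<le> norm x + 2 * norm m" using norm_triangle_ineq4[of x m] by simp
  finally show ?thesis .
qed

lemma rotate_at_barycenter_W2: "\<mu> \<in> W2 \<Longrightarrow> rotate_at_barycenter R \<mu> \<in> W2"
  unfolding rotate_at_barycenter_def
  by (rule distr_in_W2[OF _ rotation_about_measurable norm_rotation_about_le])

lemma barycenter_rotate_at_barycenter:
  assumes \<mu>: "\<mu> \<in> W2"
  shows "barycenter (rotate_at_barycenter R \<mu>) = barycenter \<mu>"
proof (rule barycenter_eqI)
  fix z
  let ?m = "barycenter \<mu>"
  interpret prob_space \<mu> using \<mu> by (simp add: W2_iff)
  have T: "bounded_linear (\<lambda>v. R v \<bullet> z)"
    by (rule bounded_linear_compose[OF bounded_linear_inner_left bounded_linear])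
  have "(\<integral>y. y \<bullet> z \<partial>rotate_at_barycenter R \<mu>) = (\<integral>x. rotation_about R ?m x \<bullet> z \<partial>\<mu>)"
    unfolding rotate_at_barycenter_def using \<mu>
    by (intro integral_distr) (simp_all add: W2_measurable rotation_about_measurable
        borel_measurable_continuous_onI continuous_intros)
  also have "\<dots> = (\<integral>x. R (x - ?m) \<bullet> z + ?m \<bullet> z \<partial>\<mu>)"
    by (simp add: rotation_about_def inner_add_left)
  also have "\<dots> = ?m \<bullet> z"
    using W2_integral_centred[OF T \<mu>] by (simp add: prob_space)
  finally show "?m \<bullet> z = (\<integral>y. y \<bullet> z \<partial>rotate_at_barycenter R \<mu>)" by simp
qed

lemma sq_dist_rotation_about:
  fixes a b x y :: 'a
  defines "u \<equiv> (x - a) - (y - b)"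
  shows "(norm (rotation_about R a x - rotation_about R b y))\<^sup>2
    = (norm (x - y))\<^sup>2 + 2 * (R u \<bullet> (a - b) - u \<bullet> (a - b))"
proof -
  have norm_add_sq: "(norm (v + w))\<^sup>2 = (norm v)\<^sup>2 + 2 * (v \<bullet> w) + (norm w)\<^sup>2" for v w :: 'a
    using dot_norm[of v w] by simp
  have "rotation_about R a x - rotation_about R b y = R u + (a - b)"
    unfolding u_def linear_diff[OF linear, of "x - a"] by (simp add: rotation_about_def algebra_simps)
  moreover have "x - y = u + (a - b)"
    by (simp add: u_def algebra_simps)
  ultimately show ?thesis by (simp add: norm_add_sq norm_eq)
qed

lemma transport_cost_distr_rotation:
  assumes \<pi>: "\<pi> \<in> couplings \<mu> \<nu>" and \<mu>: "\<mu> \<in> W2" and \<nu>: "\<nu> \<in> W2"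
  defines "h \<equiv> \<lambda>p. (rotation_about R (barycenter \<mu>) (fst p), rotation_about R (barycenter \<nu>) (snd p))"
  shows "transport_cost (distr \<pi> borel h) = transport_cost \<pi>"
proof -
  define d where "d = barycenter \<mu> - barycenter \<nu>"
  define u where "u p = (fst p - barycenter \<mu>) - (snd p - barycenter \<nu>)" for p :: "'a \<times> 'a"
  define T where "T v = R v \<bullet> d - v \<bullet> d" for v
  define sq where "sq p = (norm (fst p - snd p))\<^sup>2" for p :: "'a \<times> 'a"
  have T: "bounded_linear T"
    unfolding T_def
    by (intro bounded_linear_sub bounded_linear_inner_left
        bounded_linear_compose[OF bounded_linear_inner_left bounded_linear])
  have sq_h: "sq (h p) = sq p + 2 * T (u p)" for p
    by (simp add: sq_def h_def T_def u_def d_def sq_dist_rotation_about)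
  have int_sq: "integrable \<pi> sq"
    unfolding sq_def using \<pi> \<mu> \<nu> by (rule coupling_integrable_sq_dist)
  have int_T: "integrable \<pi> (\<lambda>p. T (u p))" and integral_T: "(\<integral>p. T (u p) \<partial>\<pi>) = 0"
    unfolding u_def using coupling_integral_centred[OF T \<pi> \<mu> \<nu>] by simp_all
  have sq_meas: "(\<lambda>p. ennreal (sq p)) \<in> borel_measurable borel"
    unfolding sq_def
    by (intro measurable_compose[OF _ measurable_ennreal] borel_measurable_continuous_onI
        continuous_intros)
  have h_meas: "h \<in> borel_measurable \<pi>"
    using \<pi> by (simp add: h_def couplings_measurable rotation_about_def
        borel_measurable_continuous_onI continuous_intros)
  have "transport_cost (distr \<pi> borel h) = (\<integral>\<^sup>+p. ennreal (sq (h p)) \<partial>\<pi>)"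
    unfolding transport_cost_def sq_def[symmetric] by (rule nn_integral_distr[OF h_meas]) (simp add: sq_meas)
  also have "\<dots> = (\<integral>\<^sup>+p. ennreal (sq p + 2 * T (u p)) \<partial>\<pi>)"
    by (simp add: sq_h)
  also have "\<dots> = ennreal (\<integral>p. sq p + 2 * T (u p) \<partial>\<pi>)"
  proof (rule nn_integral_eq_integral)
    show "integrable \<pi> (\<lambda>p. sq p + 2 * T (u p))" using int_sq int_T by simp
    show "AE p in \<pi>. 0 \<le> sq p + 2 * T (u p)" unfolding sq_h[symmetric] by (simp add: sq_def)
  qed
  also have "(\<integral>p. sq p + 2 * T (u p) \<partial>\<pi>) = (\<integral>p. sq p \<partial>\<pi>)"
    using int_sq int_T integral_T by simp
  also have "ennreal (\<integral>p. sq p \<partial>\<pi>) = transport_cost \<pi>"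
    using int_sq unfolding transport_cost_def sq_def
    by (intro nn_integral_eq_integral[symmetric]) simp_all
  finally show ?thesis .
qed

lemma INF_transport_cost_rotate_at_barycenter_le:
  assumes "\<mu> \<in> W2" "\<nu> \<in> W2"
  shows "(INF \<pi>\<in>couplings (rotate_at_barycenter R \<mu>) (rotate_at_barycenter R \<nu>). transport_cost \<pi>)
    \<le> (INF \<pi>\<in>couplings \<mu> \<nu>. transport_cost \<pi>)"
proof (rule INF_mono)
  fix \<pi> assume \<pi>: "\<pi> \<in> couplings \<mu> \<nu>"
  show "\<exists>\<pi>'\<in>couplings (rotate_at_barycenter R \<mu>) (rotate_at_barycenter R \<nu>).
      transport_cost \<pi>' \<le> transport_cost \<pi>"
    unfolding rotate_at_barycenter_def
    by (rule bexI[OF _ couplings_distr_pair[OF \<pi> continuous_rotation_about continuous_rotation_about]])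
      (simp add: transport_cost_distr_rotation[OF \<pi> assms])
qed

lemma inv_linear_isometry:
  assumes "bij R"
  shows "linear_isometry (inv R)"
proof (rule linear_isometry.intro)
  have R_inv: "R (inv R x) = x" for x
    using assms by (simp add: bij_is_surj surj_f_inv_f)
  have inv_R: "inv R (R x) = x" for x
    using inj by simp
  show "linear (inv R)"
  proof (rule linearI)
    show "inv R (x + y) = inv R x + inv R y" for x y
      by (metis R_inv inv_R linear_add[OF linear])
    show "inv R (c *\<^sub>R x) = c *\<^sub>R inv R x" for c x
      by (metis R_inv inv_R linear_scale[OF linear])
  qed
  show "norm (inv R x) = norm x" for x
    by (metis norm_eq R_inv)
qed

lemma rotate_at_barycenter_inv:
  assumes "bij R" and \<mu>: "\<mu> \<in> W2"
  shows "rotate_at_barycenter (inv R) (rotate_at_barycenter R \<mu>) = \<mu>"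
proof -
  interpret inv: linear_isometry "inv R" by (rule inv_linear_isometry[OF assms(1)])
  let ?m = "barycenter \<mu>"
  have "rotate_at_barycenter (inv R) (rotate_at_barycenter R \<mu>)
      = distr (distr \<mu> borel (rotation_about R ?m)) borel (rotation_about (inv R) ?m)"
    unfolding rotate_at_barycenter_def[of "inv R"] barycenter_rotate_at_barycenter[OF \<mu>]
    by (simp add: rotate_at_barycenter_def)
  also have "\<dots> = distr \<mu> borel (rotation_about (inv R) ?m \<circ> rotation_about R ?m)"
    using \<mu> by (intro distr_distr inv.rotation_about_measurable)
      (simp add: W2_measurable rotation_about_measurable)
  also have "rotation_about (inv R) ?m \<circ> rotation_about R ?m = (\<lambda>x. x)"
    by (simp add: fun_eq_iff rotation_about_def inv_f_f[OF inj])
  also have "distr \<mu> borel (\<lambda>x. x) = \<mu>"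
    using \<mu> by (intro distr_id2) (simp add: W2_def)
  finally show ?thesis .
qed

lemma INF_transport_cost_rotate_at_barycenter:
  assumes "bij R" and \<mu>: "\<mu> \<in> W2" and \<nu>: "\<nu> \<in> W2"
  shows "(INF \<pi>\<in>couplings (rotate_at_barycenter R \<mu>) (rotate_at_barycenter R \<nu>). transport_cost \<pi>)
    = (INF \<pi>\<in>couplings \<mu> \<nu>. transport_cost \<pi>)"
proof (rule antisym)
  interpret inv: linear_isometry "inv R" by (rule inv_linear_isometry[OF assms(1)])
  show "(INF \<pi>\<in>couplings (rotate_at_barycenter R \<mu>) (rotate_at_barycenter R \<nu>). transport_cost \<pi>)
    \<le> (INF \<pi>\<in>couplings \<mu> \<nu>. transport_cost \<pi>)"
    by (rule INF_transport_cost_rotate_at_barycenter_le[OF \<mu> \<nu>])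
  show "(INF \<pi>\<in>couplings \<mu> \<nu>. transport_cost \<pi>)
    \<le> (INF \<pi>\<in>couplings (rotate_at_barycenter R \<mu>) (rotate_at_barycenter R \<nu>). transport_cost \<pi>)"
    using inv.INF_transport_cost_rotate_at_barycenter_le[OF rotate_at_barycenter_W2[OF \<mu>]
        rotate_at_barycenter_W2[OF \<nu>]]
    by (simp add: rotate_at_barycenter_inv assms)
qed

lemma dW2_rotate_at_barycenter:
  assumes "bij R" and "\<mu> \<in> W2" and "\<nu> \<in> W2"
  shows "dW2 (rotate_at_barycenter R \<mu>) (rotate_at_barycenter R \<nu>) = dW2 \<mu> \<nu>"
  using INF_transport_cost_rotate_at_barycenter[OF assms] by (simp add: dW2_def transport_cost_def)

lemma bij_betw_rotate_at_barycenter: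
  assumes "bij R"
  shows "bij_betw (rotate_at_barycenter R) W2 W2"
proof -
  interpret inv: linear_isometry "inv R" by (rule inv_linear_isometry[OF assms])
  have "rotate_at_barycenter R (rotate_at_barycenter (inv R) \<nu>) = \<nu>" if "\<nu> \<in> W2" for \<nu>
    using inv.rotate_at_barycenter_inv[OF bij_imp_bij_inv[OF assms] that]
    by (simp add: inv_inv_eq[OF assms])
  then show ?thesis
    by (intro bij_betwI[where g = "rotate_at_barycenter (inv R)"])
      (auto simp: rotate_at_barycenter_W2 inv.rotate_at_barycenter_W2 rotate_at_barycenter_inv assms)
qed

end

theorem corollary3p14:
  fixes R :: "'a::{real_inner, complete_space, second_countable_topology} \<Rightarrow> 'a"
  assumes inf_dim: "\<nexists>B::'a set. finite B \<and> span B = UNIV"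
    and lin: "linear R"
    and iso: "bij R" "\<And>x y. dist (R x) (R y) = dist x y"
  defines "\<Phi> \<equiv> (\<lambda>\<mu>. distr \<mu> borel
             (transl (barycenter \<mu>) \<circ> R \<circ> transl (- barycenter \<mu>)))"
  shows "bij_betw \<Phi> W2 W2 \<and> (\<forall>\<mu>\<in>W2. \<forall>\<nu>\<in>W2. dW2 (\<Phi> \<mu>) (\<Phi> \<nu>) = dW2 \<mu> \<nu>)"
proof -
  have "norm (R x) = norm x" for x
    using iso(2)[of x 0] linear_0[OF lin] by (simp add: dist_norm)
  with lin interpret linear_isometry R by (simp add: linear_isometry_def)
  have "\<Phi> = rotate_at_barycenter R"
    unfolding \<Phi>_def rotate_at_barycenter_def rotation_about_def transl_def comp_def by simp
  then show ?thesis
    using bij_betw_rotate_at_barycenter[OF iso(1)] dW2_rotate_at_barycenter[OF iso(1)] by simp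
qed

end
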